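(* Let $N\ge2$, $b_1,\dots,b_N\in\{0,1\}$ with $b_N=1$ and $\sum_j b_j2^{N-j}>1$, and let $\rho$ be the largest real root of $x^N-\sum_{j=1}^N b_jx^{N-j}$ (so $1<\rho<2$). Let $Z[\rho]$ denote the set of numbers $\sum_{k=0}^n z_k\rho^k$ with $n\ge0$ and $z_k\in\{0,1\}$. Then $2\notin Z[\rho]$. *)

theory Defs
  imports Complex_Main
begin

definition Zset :: "real \<Rightarrow> real set" where
  "Zset \<rho> = {(\<Sum>k\<le>n. real (z k) * \<rho> ^ k) | n z. \<forall>k\<le>n. z k \<in> {0, 1}}"

definition charpoly :: "nat \<Rightarrow> (nat \<Rightarrow> nat) \<Rightarrow> real \<Rightarrow> real" where
  "charpoly N b x = x ^ N - (\<Sum>j=1..N. real (b j) * x ^ (N - j))"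

end

theory Submission
  imports Defs "HOL-Computational_Algebra.Computational_Algebra"
begin

text \<open>
  Suppose 2 = \<Sum> z_k \<rho>^k. Then \<rho> is a common root of the integer polynomials
  h(x) = \<Sum> z_k x^k - 2 and P(x) = x^N - \<Sum> b_j x^(N-j). Let f be a prime factor
  of P vanishing at \<rho>. Every complex root \<alpha> of f is then also a root of h, and
  2 = |\<Sum> z_k \<alpha>^k| \<le> \<Sum> z_k |\<alpha>|^k forces |\<alpha>| \<ge> \<rho>. But f divides P, whose constant
  coefficient is -1, so the product of the moduli of the roots of f is at most 1,
  while \<rho> > 1 by the intermediate value theorem.
\<close>

definition ipoly :: "int poly \<Rightarrow> 'a::comm_ring_1 \<Rightarrow> 'a" where
  "ipoly p x = poly (map_poly of_int p) x"

lemma ipoly_0 [simp]: "ipoly 0 x = 0"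
  by (simp add: ipoly_def)

lemma ipoly_add [simp]: "ipoly (p + q) x = ipoly p x + ipoly q x"
proof -
  have "map_poly of_int (p + q) = map_poly of_int p + (map_poly of_int q :: 'a poly)"
    by (rule poly_eqI) (simp add: coeff_map_poly)
  then show ?thesis by (simp add: ipoly_def)
qed

lemma ipoly_diff [simp]: "ipoly (p - q) x = ipoly p x - ipoly q x"
proof -
  have "map_poly of_int (p - q) = map_poly of_int p - (map_poly of_int q :: 'a poly)"
    by (rule poly_eqI) (simp add: coeff_map_poly)
  then show ?thesis by (simp add: ipoly_def)
qed

lemma ipoly_mult [simp]: "ipoly (p * q) x = ipoly p x * ipoly q x"
proof -
  have "map_poly of_int (p * q) = map_poly of_int p * (map_poly of_int q :: 'a poly)"
    by (rule poly_eqI) (simp add: coeff_map_poly coeff_mult)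
  then show ?thesis by (simp add: ipoly_def)
qed

lemma ipoly_smult [simp]: "ipoly (smult a p) x = of_int a * ipoly p x"
  by (simp add: ipoly_def map_poly_smult)

lemma ipoly_sum: "ipoly (\<Sum>i\<in>A. p i) x = (\<Sum>i\<in>A. ipoly (p i) x)"
  by (induction A rule: infinite_finite_induct) simp_all

lemma ipoly_monom [simp]: "ipoly (monom c n) x = of_int c * x ^ n"
  by (simp add: ipoly_def map_poly_monom poly_monom)

lemma ipoly_const [simp]: "ipoly [:c:] x = of_int c"
  by (simp add: ipoly_def map_poly_pCons)

lemma degree_pos_if_ipoly_root:
  fixes x :: "'a::{idom, ring_char_0}"
  assumes "p \<noteq> 0" and "ipoly p x = 0"
  shows "0 < degree p"
proof (rule ccontr)
  assume "\<not> 0 < degree p"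
  then obtain c where "p = [:c:]" by (metis degree_eq_zeroE neq0_conv)
  with assms show False by simp
qed

lemma prime_factor_with_root:
  fixes x :: "'a::{idom, ring_char_0}"
  shows "h \<noteq> 0 \<Longrightarrow> ipoly h x = 0 \<Longrightarrow> \<exists>f. prime f \<and> f dvd h \<and> ipoly f x = 0"
proof (induction h rule: prime_divisors_induct)
  case (unit u)
  then obtain c where "u = [:c:]" "c \<noteq> 0"
    by (metis is_unit_poly_iff zero_neq_one unit_imp_dvd dvd_0_left_iff)
  with unit.prems show ?case by simp
next
  case (factor p h)
  show ?case
  proof (cases "ipoly p x = 0")
    case True
    with factor.hyps show ?thesis by auto
  next
    case False
    with factor.prems have "h \<noteq> 0" "ipoly h x = 0" by auto
    with factor.IH obtain f where "prime f" "f dvd h" "ipoly f x = 0" by blast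
    then show ?thesis by (auto intro: dvd_mult_left)
  qed
qed simp

text \<open>A vanishing polynomial of minimal degree plays the role of the minimal polynomial;
  pseudo-division replaces division, which is unavailable over \<open>\<int>\<close>.\<close>

lemma min_degree_root_poly_dvd_smult:
  fixes x :: "'a::{idom, ring_char_0}"
  assumes g: "g \<noteq> 0" "ipoly g x = 0"
    and minimal: "\<And>p. p \<noteq> 0 \<Longrightarrow> ipoly p x = 0 \<Longrightarrow> degree g \<le> degree p"
    and h: "ipoly h x = 0"
  shows "\<exists>a. a \<noteq> 0 \<and> g dvd smult a h"
proof -
  define r where "r = pseudo_mod h g"
  obtain a q where aq: "a \<noteq> 0" "smult a h = g * q + r"
    using pseudo_mod(1)[OF g(1), of h] unfolding r_def by blast
  have "ipoly r x = 0"
    using arg_cong[OF aq(2), of "\<lambda>p. ipoly p x"] g(2) h by simp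
  moreover have "r = 0 \<or> degree r < degree g"
    using pseudo_mod(2)[OF g(1), of h] unfolding r_def by blast
  ultimately have "r = 0" using minimal by force
  with aq show ?thesis by auto
qed

lemma prime_poly_dvd_smult_if_common_root:
  fixes x :: "'a::{idom, ring_char_0}"
  assumes f: "prime f" "ipoly f x = 0" and h: "ipoly h x = 0"
  shows "\<exists>a. a \<noteq> 0 \<and> f dvd smult a h"
proof -
  obtain g where g: "g \<noteq> 0" "ipoly g x = 0"
    and minimal: "\<And>p. p \<noteq> 0 \<Longrightarrow> ipoly p x = 0 \<Longrightarrow> degree g \<le> degree p"
    using ex_has_least_nat[of "\<lambda>p. p \<noteq> 0 \<and> ipoly p x = 0" f degree] f by auto
  have g_dvd: "\<exists>a. a \<noteq> 0 \<and> g dvd smult a p" if "ipoly p x = 0" for p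
    by (rule min_degree_root_poly_dvd_smult[OF g]) (fact minimal, fact that)
  obtain c t where "c \<noteq> 0" and ct: "smult c f = g * t"
    using g_dvd[OF f(2)] by (auto simp: dvd_def)
  have "\<not> f dvd t"
  proof
    assume "f dvd t"
    then obtain u where "t = f * u" by (auto simp: dvd_def)
    with ct have "[:c:] * f = (g * u) * f" by (simp add: mult_ac)
    moreover have "f \<noteq> 0" using f(1) by auto
    ultimately have "g * u = [:c:]" by (metis mult_cancel_right)
    with \<open>c \<noteq> 0\<close> have "degree g = 0"
      by (metis degree_mult_eq degree_pCons_0 add_is_0 mult_zero_right pCons_eq_0_iff)
    with degree_pos_if_ipoly_root[OF g] show False by simp
  qed
  moreover have "f dvd g * t"
    using ct by (metis dvd_smult dvd_refl)
  ultimately have "f dvd g"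
    using f(1) by (simp add: prime_dvd_mult_iff)
  with g_dvd[OF h] show ?thesis by (blast intro: dvd_trans)
qed

lemma prime_poly_root_transfer:
  fixes x :: "'a::{idom, ring_char_0}" and y :: "'b::{idom, ring_char_0}"
  assumes "prime f" "ipoly f x = 0" "ipoly h x = 0" "ipoly f y = 0"
  shows "ipoly h y = 0"
proof -
  obtain a where "a \<noteq> 0" "f dvd smult a h"
    using prime_poly_dvd_smult_if_common_root[OF assms(1-3)] by blast
  then obtain t where "smult a h = f * t" by (auto simp: dvd_def)
  then have "of_int a * ipoly h y = ipoly f y * ipoly t y"
    by (metis ipoly_smult ipoly_mult)
  with assms(4) \<open>a \<noteq> 0\<close> show ?thesis by simp
qed

lemma lead_coeff_root_bound_le_coeff_0:
  fixes p :: "complex poly"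
  assumes "0 \<le> r" and roots: "\<And>z. poly p z = 0 \<Longrightarrow> r \<le> norm z"
  shows "norm (lead_coeff p) * r ^ degree p \<le> norm (coeff p 0)"
proof (cases "p = 0")
  case False
  obtain root where p: "smult (lead_coeff p) (\<Prod>i<degree p. [:-root i, 1:]) = p"
    by (rule complex_poly_decompose')
  have "r \<le> norm (root i)" if "i < degree p" for i
  proof (rule roots)
    show "poly p (root i) = 0"
      by (subst p [symmetric]) (use that in \<open>auto simp: poly_prod\<close>)
  qed
  then have "(\<Prod>i<degree p. r) \<le> (\<Prod>i<degree p. norm (root i))"
    using \<open>0 \<le> r\<close> by (intro prod_mono) auto
  moreover have "coeff p 0 = lead_coeff p * (\<Prod>i<degree p. - root i)"
    by (subst (1) p [symmetric]) (simp add: poly_0_coeff_0 [symmetric] poly_prod)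
  ultimately show ?thesis
    by (simp add: norm_mult prod_norm [symmetric] mult_left_mono)
qed simp

lemma unit_coeff_0_root_bound_le_1:
  fixes f :: "int poly" and r :: real
  assumes "0 < degree f" and coeff_0: "\<bar>coeff f 0\<bar> = 1"
    and roots: "\<And>z::complex. ipoly f z = 0 \<Longrightarrow> r \<le> norm z"
  shows "r \<le> 1"
proof (rule ccontr)
  assume "\<not> r \<le> 1"
  define F :: "complex poly" where "F = map_poly of_int f"
  have "f \<noteq> 0"
    using \<open>0 < degree f\<close> by auto
  then have "lead_coeff f \<noteq> 0"
    by simp
  then have "1 \<le> \<bar>lead_coeff f\<bar>"
    by arith
  have "1 < r ^ degree f"
    using \<open>\<not> r \<le> 1\<close> \<open>0 < degree f\<close> by (simp add: one_less_power)
  also have "\<dots> \<le> \<bar>lead_coeff f\<bar> * r ^ degree f"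
    using \<open>1 \<le> \<bar>lead_coeff f\<bar>\<close> \<open>\<not> r \<le> 1\<close> by (simp add: mult_le_cancel_right1 flip: of_int_abs)
  also have "\<dots> = norm (lead_coeff F) * r ^ degree F"
    by (simp add: F_def degree_map_poly coeff_map_poly)
  also have "\<dots> \<le> norm (coeff F 0)"
    using \<open>\<not> r \<le> 1\<close> roots by (intro lead_coeff_root_bound_le_coeff_0) (auto simp: F_def ipoly_def)
  also have "\<dots> = 1"
    using coeff_0 by (simp add: F_def coeff_map_poly)
  finally show False
    by simp
qed

lemma digit_sum_root_norm_ge:
  fixes z :: "nat \<Rightarrow> nat" and \<rho> :: real and \<alpha> :: complex
  assumes digits: "\<forall>k\<le>n. z k \<in> {0, 1}"
    and at_rho: "(\<Sum>k\<le>n. real (z k) * \<rho> ^ k) = 2"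
    and at_alpha: "(\<Sum>k\<le>n. of_nat (z k) * \<alpha> ^ k) = 2"
  shows "\<rho> \<le> norm \<alpha>"
proof (rule ccontr)
  assume less: "\<not> \<rho> \<le> norm \<alpha>"
  have "\<exists>k0. k0 \<le> n \<and> 0 < k0 \<and> z k0 = 1"
  proof (rule ccontr)
    assume none: "\<not> ?thesis"
    have "(\<Sum>k\<le>n. real (z k) * \<rho> ^ k) = (\<Sum>k\<in>{0}. real (z k) * \<rho> ^ k)"
      using digits none by (intro sum.mono_neutral_right) auto
    with digits at_rho show False by auto
  qed
  then obtain k0 where k0: "k0 \<le> n" "0 < k0" "z k0 = 1"
    by blast
  have "2 = norm (\<Sum>k\<le>n. of_nat (z k) * \<alpha> ^ k)"
    using at_alpha by simp
  also have "\<dots> \<le> (\<Sum>k\<le>n. real (z k) * norm \<alpha> ^ k)"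
    by (rule order_trans[OF norm_sum]) (simp add: norm_mult norm_power)
  also have "\<dots> < (\<Sum>k\<le>n. real (z k) * \<rho> ^ k)"
  proof (rule sum_strict_mono_ex1)
    show "\<forall>k\<in>{..n}. real (z k) * norm \<alpha> ^ k \<le> real (z k) * \<rho> ^ k"
      using less by (auto intro!: mult_left_mono power_mono)
    have "norm \<alpha> ^ k0 < \<rho> ^ k0"
      using less k0(2) by (intro power_strict_mono) auto
    with k0 show "\<exists>k\<in>{..n}. real (z k) * norm \<alpha> ^ k < real (z k) * \<rho> ^ k"
      by (intro bexI[of _ k0]) simp_all
  qed simp
  finally show False
    using at_rho by simp
qed

definition int_charpoly :: "nat \<Rightarrow> (nat \<Rightarrow> nat) \<Rightarrow> int poly" where
  "int_charpoly N b = monom 1 N - (\<Sum>j=1..N. monom (int (b j)) (N - j))"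

lemma ipoly_int_charpoly: "ipoly (int_charpoly N b) x = charpoly N b x"
  by (simp add: int_charpoly_def charpoly_def ipoly_sum)

lemma coeff_0_int_charpoly:
  assumes "1 \<le> N" and "b N = 1"
  shows "coeff (int_charpoly N b) 0 = -1"
proof -
  have "(\<Sum>j=1..N. coeff (monom (int (b j)) (N - j)) 0) = (\<Sum>j\<in>{N}. int (b j))"
    by (rule sum.mono_neutral_cong_right) (use assms in \<open>auto simp: coeff_monom\<close>)
  with assms show ?thesis
    by (simp add: int_charpoly_def coeff_sum coeff_monom)
qed

lemma two_le_sum_digits:
  assumes digits: "\<forall>j\<in>{1..N}. b j \<in> {0, 1}" and "b N = 1"
    and gt_1: "(\<Sum>j=1..N. b j * 2 ^ (N - j)) > (1::nat)"
  shows "2 \<le> (\<Sum>j=1..N. b j)"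
proof -
  have "1 \<le> N"
    using gt_1 by (cases N) auto
  have "\<exists>j0. j0 \<in> {1..N} \<and> j0 \<noteq> N \<and> b j0 = 1"
  proof (rule ccontr)
    assume none: "\<not> ?thesis"
    have zero: "b j = 0" if "j \<in> {1..N} - {N}" for j
      using digits none that by fastforce
    have "(\<Sum>j=1..N. b j * 2 ^ (N - j)) = (\<Sum>j\<in>{N}. b j * 2 ^ (N - j))"
      using \<open>1 \<le> N\<close> zero by (intro sum.mono_neutral_right) auto
    with \<open>b N = 1\<close> gt_1 show False by simp
  qed
  then obtain j0 where j0: "j0 \<in> {1..N}" "j0 \<noteq> N" "b j0 = 1"
    by blast
  then have "(\<Sum>j\<in>{j0, N}. b j) \<le> (\<Sum>j=1..N. b j)"
    by (intro sum_mono2) auto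
  with j0 \<open>b N = 1\<close> show ?thesis by simp
qed

lemma charpoly_root_gt_1:
  assumes digits: "\<forall>j\<in>{1..N}. b j \<in> {0, 1}" and "1 \<le> N"
    and two_le: "2 \<le> (\<Sum>j=1..N. b j)"
  shows "\<exists>x>1. charpoly N b x = 0"
proof -
  have at_1: "charpoly N b 1 < 0"
    using two_le by (simp add: charpoly_def flip: of_nat_sum)
  define M :: real where "M = real N + 1"
  have "(\<Sum>j=1..N. real (b j) * M ^ (N - j)) \<le> (\<Sum>j=1..N. M ^ (N - 1))"
  proof (rule sum_mono)
    fix j assume j: "j \<in> {1..N}"
    with digits have "b j \<in> {0, 1}" by blast
    then have "real (b j) \<le> 1" by auto
    moreover have "M ^ (N - j) \<le> M ^ (N - 1)"
      using j by (intro power_increasing) (auto simp: M_def)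
    ultimately show "real (b j) * M ^ (N - j) \<le> M ^ (N - 1)"
      using mult_mono[of "real (b j)" 1 "M ^ (N - j)" "M ^ (N - 1)"] by (simp add: M_def)
  qed
  also have "\<dots> < M * M ^ (N - 1)"
    by (simp add: M_def)
  also have "\<dots> = M ^ N"
    using \<open>1 \<le> N\<close> by (simp flip: power_Suc)
  finally have at_M: "charpoly N b M > 0"
    by (simp add: charpoly_def)
  have "\<forall>x. 1 \<le> x \<and> x \<le> M \<longrightarrow> isCont (charpoly N b) x"
    unfolding charpoly_def by (auto intro!: continuous_intros)
  moreover have "1 \<le> M"
    by (simp add: M_def)
  ultimately obtain x where "1 \<le> x" "charpoly N b x = 0"
    using IVT[of "charpoly N b" 1 0 M] at_1 at_M by auto
  moreover from at_1 this(2) have "x \<noteq> 1"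
    by auto
  ultimately show ?thesis
    by (intro exI[of _ x]) simp
qed

definition digit_poly :: "nat \<Rightarrow> (nat \<Rightarrow> nat) \<Rightarrow> int poly" where
  "digit_poly n z = (\<Sum>k\<le>n. monom (int (z k)) k)"

lemma ipoly_digit_poly: "ipoly (digit_poly n z) x = (\<Sum>k\<le>n. of_nat (z k) * x ^ k)"
  by (simp add: digit_poly_def ipoly_sum)

theorem mainTheorem8:
  fixes N :: nat and b :: "nat \<Rightarrow> nat" and \<rho> :: real
  assumes "N \<ge> 2"
    and "\<forall>j\<in>{1..N}. b j \<in> {0, 1}"
    and "b N = 1"
    and "(\<Sum>j=1..N. b j * 2 ^ (N - j)) > 1"
    and "charpoly N b \<rho> = 0"
    and "\<forall>x. charpoly N b x = 0 \<longrightarrow> x \<le> \<rho>"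
  shows "(2::real) \<notin> Zset \<rho>"
proof
  assume "(2::real) \<in> Zset \<rho>"
  then obtain n z where digits: "\<forall>k\<le>n. z k \<in> {0, 1}"
    and two: "(\<Sum>k\<le>n. real (z k) * \<rho> ^ k) = 2"
    unfolding Zset_def by auto
  obtain x where "1 < x" "charpoly N b x = 0"
    using charpoly_root_gt_1[OF assms(2) _ two_le_sum_digits[OF assms(2-4)]] assms(1) by auto
  with assms(6) have "1 < \<rho>"
    by (meson less_le_trans)
  define P where "P = int_charpoly N b"
  have P: "coeff P 0 = -1" "ipoly P \<rho> = 0"
    using coeff_0_int_charpoly[of N b] assms(1,3,5) by (auto simp: P_def ipoly_int_charpoly)
  then have "P \<noteq> 0"
    by auto
  with P obtain f where f: "prime f" "f dvd P" "ipoly f \<rho> = 0"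
    using prime_factor_with_root[of P \<rho>] by auto
  then obtain g where "P = f * g"
    by (auto simp: dvd_def)
  with P(1) have "\<bar>coeff f 0 * coeff g 0\<bar> = 1"
    by (simp add: coeff_mult_0)
  then have "\<bar>coeff f 0\<bar> = 1"
    by (rule abs_zmult_eq_1)
  moreover have "0 < degree f"
    using f by (intro degree_pos_if_ipoly_root[of f \<rho>]) auto
  moreover have "\<rho> \<le> norm \<alpha>" if "ipoly f \<alpha> = 0" for \<alpha> :: complex
  proof -
    have "ipoly (digit_poly n z - [:2:]) \<rho> = 0"
      using two by (simp add: ipoly_digit_poly)
    then have "ipoly (digit_poly n z - [:2:]) \<alpha> = 0"
      by (rule prime_poly_root_transfer[OF f(1) f(3) _ that])
    then show ?thesis
      using digit_sum_root_norm_ge[OF digits two] by (simp add: ipoly_digit_poly)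
  qed
  ultimately have "\<rho> \<le> 1"
    using unit_coeff_0_root_bound_le_1[of f \<rho>] by blast
  with \<open>1 < \<rho>\<close> show False by simp
qed

end
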